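(* Let $\mathbb{R}^n$ and $\mathbb{R}^m$ be equipped with arbitrary norms $\|\cdot\|$, with dual norms $\|\cdot\|_*$, and let $g:\mathbb{R}^n\to\mathbb{R}^m$, $y\in\mathbb{R}^m$, $\rho>0$, $L>0$, $\mu_0>0$. Let $B=\{x\in\mathbb{R}^n:\|x\|\le\rho\}$. Assume: (A) $g(0)=0$, $g$ is differentiable in $B$, and $\|g'(x^a)-g'(x^b)\|\le L\|x^a-x^b\|$ for all $x^a,x^b\in B$; (B') $\|g'(0)^T h\|_*\ge\mu_0\|h\|_*$ for all $h\in\mathbb{R}^m$; (C') $\|y\|<\frac{\mu_0^2}{4L}$ and $\frac{\mu_0}{2L}\le\rho$. Then there exists a solution $x^*$ of $g(x)=y$ with $\|x^*\|\le\frac{2\|y\|}{\mu_0}$.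
   Context: For a vector $c$, the dual norm is $\|c\|_*=\sup_{\|x\|=1}(c,x)$. The norm of $g'(x)$ is the operator norm subordinate to the chosen vector norms. *)

theory Defs
  imports "HOL-Analysis.Analysis"
begin

definition is_norm :: "('a::real_vector \<Rightarrow> real) \<Rightarrow> bool" where
  "is_norm N \<longleftrightarrow> (\<forall>x. 0 \<le> N x) \<and> (\<forall>x. N x = 0 \<longleftrightarrow> x = 0)
     \<and> (\<forall>c x. N (c *\<^sub>R x) = \<bar>c\<bar> * N x) \<and> (\<forall>x y. N (x + y) \<le> N x + N y)"

definition dual_norm :: "(real^'n \<Rightarrow> real) \<Rightarrow> real^'n \<Rightarrow> real" where
  "dual_norm N c = Sup {c \<bullet> x | x. N x = 1}"

definition op_norm :: "(real^'n \<Rightarrow> real) \<Rightarrow> (real^'m \<Rightarrow> real) \<Rightarrow> real^'n^'m \<Rightarrow> real" where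
  "op_norm Nn Nm A = Sup {Nm (A *v x) | x. Nn x = 1}"

end

theory Submission
  imports Defs
begin

text \<open>
  Let \<open>x\<close> minimise the merit function \<open>\<Psi>(x) = (2/\<mu>0)\<parallel>g(x) - y\<parallel> + \<parallel>x\<parallel>\<close> over the compact
  ball \<open>B\<close>. Since \<open>\<Psi>(0) = 2\<parallel>y\<parallel>/\<mu>0\<close>, we get \<open>\<parallel>x\<parallel> \<le> 2\<parallel>y\<parallel>/\<mu>0 < \<mu>0/(2L) \<le> \<rho>\<close>, so \<open>x\<close> is an
  interior point and \<open>\<parallel>g'(x) - g'(0)\<parallel> < \<mu>0/2\<close>. By separation of convex sets, (B') says that
  the image of the unit ball under \<open>g'(0)\<close> contains the \<open>\<mu>0\<close>-ball, so \<open>e = y - g(x)\<close> has a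
  preimage \<open>d\<close> with \<open>\<parallel>d\<parallel> \<le> \<parallel>e\<parallel>/\<mu>0\<close>. If \<open>e \<noteq> 0\<close>, moving from \<open>x\<close> along \<open>d\<close> decreases \<open>\<Psi>\<close> to first
  order, because \<open>g'(x) d\<close> differs from \<open>e\<close> by less than \<open>\<parallel>e\<parallel>/2\<close>; this contradicts minimality.
\<close>

section \<open>Norms given as functions\<close>

lemma is_norm_nonneg: "is_norm N \<Longrightarrow> 0 \<le> N x"
  and is_norm_eq_0_iff: "is_norm N \<Longrightarrow> N x = 0 \<longleftrightarrow> x = 0"
  and is_norm_scaleR: "is_norm N \<Longrightarrow> N (c *\<^sub>R x) = \<bar>c\<bar> * N x"
  and is_norm_triangle: "is_norm N \<Longrightarrow> N (x + y) \<le> N x + N y"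
  unfolding is_norm_def by blast+

lemma is_norm_zero: "is_norm N \<Longrightarrow> N 0 = 0"
  by (simp add: is_norm_eq_0_iff)

lemma is_norm_pos: "is_norm N \<Longrightarrow> x \<noteq> 0 \<Longrightarrow> 0 < N x"
  by (metis is_norm_eq_0_iff is_norm_nonneg order_le_less)

lemma is_norm_minus_commute: "is_norm N \<Longrightarrow> N (x - y) = N (y - x)"
  using is_norm_scaleR[of N "-1" "x - y"] by simp

lemma is_norm_normalize: "is_norm N \<Longrightarrow> x \<noteq> 0 \<Longrightarrow> N ((1 / N x) *\<^sub>R x) = 1"
  using is_norm_pos[of N x] by (simp add: is_norm_scaleR)

lemma is_norm_sum: "is_norm N \<Longrightarrow> N (sum f S) \<le> (\<Sum>i\<in>S. N (f i))"
proof (induction S rule: infinite_finite_induct)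
  case (insert a F)
  then show ?case using is_norm_triangle[of N "f a" "sum f F"] by simp
qed (simp_all add: is_norm_zero)

lemma is_norm_le_norm:
  fixes N :: "'a::euclidean_space \<Rightarrow> real"
  assumes "is_norm N"
  obtains C where "C > 0" "\<And>x. N x \<le> C * norm x"
proof
  let ?C = "(\<Sum>b\<in>Basis. N b) + 1"
  show "?C > 0" using is_norm_nonneg[OF assms] by (simp add: sum_nonneg add_nonneg_pos)
  fix x :: 'a
  have "N x = N (\<Sum>b\<in>Basis. (x \<bullet> b) *\<^sub>R b)" by (simp add: euclidean_representation)
  also have "\<dots> \<le> (\<Sum>b\<in>Basis. N ((x \<bullet> b) *\<^sub>R b))" by (rule is_norm_sum[OF assms])
  also have "\<dots> = (\<Sum>b\<in>Basis. \<bar>x \<bullet> b\<bar> * N b)" by (simp add: is_norm_scaleR[OF assms])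
  also have "\<dots> \<le> (\<Sum>b\<in>Basis. norm x * N b)"
    by (intro sum_mono mult_right_mono) (auto simp: Basis_le_norm is_norm_nonneg[OF assms])
  also have "\<dots> \<le> ?C * norm x" by (simp add: sum_distrib_left algebra_simps)
  finally show "N x \<le> ?C * norm x" .
qed

lemma is_norm_lipschitz:
  fixes N :: "'a::euclidean_space \<Rightarrow> real"
  assumes "is_norm N"
  obtains C where "C-lipschitz_on UNIV N"
proof -
  obtain C where C: "C > 0" "\<And>x. N x \<le> C * norm x" using is_norm_le_norm[OF assms] by blast
  have "\<bar>N x - N y\<bar> \<le> C * dist x y" for x y
    using is_norm_triangle[OF assms, of "x - y" y] is_norm_triangle[OF assms, of "y - x" x]
      is_norm_minus_commute[OF assms, of x y] C(2)[of "x - y"]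
    by (simp add: dist_norm)
  then have "C-lipschitz_on UNIV N" using C(1) by (intro lipschitz_onI) (auto simp: dist_real_def)
  then show thesis ..
qed

lemma is_norm_continuous_on:
  fixes N :: "'a::euclidean_space \<Rightarrow> real"
  assumes "is_norm N"
  shows "continuous_on S N"
proof -
  obtain C where "C-lipschitz_on UNIV N" using is_norm_lipschitz[OF assms] .
  then show ?thesis using lipschitz_on_continuous_on continuous_on_subset subset_UNIV by metis
qed

lemma is_norm_ge_norm:
  fixes N :: "'a::euclidean_space \<Rightarrow> real"
  assumes "is_norm N"
  obtains c where "c > 0" "\<And>x. c * norm x \<le> N x"
proof -
  have "sphere (0::'a) 1 \<noteq> {}"
    using nonempty_Basis norm_Basis by (metis mem_sphere_0 all_not_in_conv)
  then obtain u where u: "u \<in> sphere 0 1" "\<And>v. v \<in> sphere 0 1 \<Longrightarrow> N u \<le> N v"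
    using continuous_attains_inf[OF compact_sphere _ is_norm_continuous_on[OF assms]] by blast
  have "N u * norm x \<le> N x" for x
  proof (cases "x = 0")
    case False
    have "N u \<le> N ((1 / norm x) *\<^sub>R x)" using u(2) False by simp
    also have "\<dots> = N x / norm x" by (simp add: is_norm_scaleR[OF assms])
    finally show ?thesis using False by (simp add: field_simps)
  qed (simp add: is_norm_zero[OF assms])
  moreover have "N u > 0" using u(1) is_norm_pos[OF assms, of u] by force
  ultimately show thesis using that by blast
qed

lemma is_norm_unit_exists:
  fixes N :: "'a::euclidean_space \<Rightarrow> real"
  assumes "is_norm N"
  obtains u where "N u = 1"
proof -
  obtain b :: 'a where "b \<in> Basis" using nonempty_Basis by blast
  then show thesis using that is_norm_normalize[OF assms, of b] nonzero_Basis by blast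
qed

lemma compact_is_norm_ball:
  fixes N :: "'a::euclidean_space \<Rightarrow> real"
  assumes "is_norm N"
  shows "compact {x. N x \<le> r}"
proof -
  obtain c where c: "c > 0" "\<And>x. c * norm x \<le> N x" using is_norm_ge_norm[OF assms] by blast
  have "closed {x. N x \<le> r}"
    using is_norm_continuous_on[OF assms] by (intro closed_Collect_le continuous_on_const)
  moreover have "norm x \<le> r / c" if "N x \<le> r" for x
    using c(2)[of x] that c(1) by (simp add: field_simps)
  then have "bounded {x. N x \<le> r}" by (auto simp: bounded_iff)
  ultimately show ?thesis by (simp add: compact_eq_bounded_closed)
qed

lemma convex_is_norm_ball:
  assumes "is_norm N"
  shows "convex {x. N x \<le> r}"
proof (rule convexI, clarsimp)
  fix x y and u v :: real
  assume h: "N x \<le> r" "N y \<le> r" "0 \<le> u" "0 \<le> v" "u + v = 1"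
  have "N (u *\<^sub>R x + v *\<^sub>R y) \<le> N (u *\<^sub>R x) + N (v *\<^sub>R y)" by (rule is_norm_triangle[OF assms])
  also have "\<dots> = u * N x + v * N y" using h(3,4) by (simp add: is_norm_scaleR[OF assms])
  also have "\<dots> \<le> u * r + v * r" using h by (intro add_mono mult_left_mono) auto
  also have "\<dots> = r" using h(5) by (metis distrib_right mult_1)
  finally show "N (u *\<^sub>R x + v *\<^sub>R y) \<le> r" .
qed

section \<open>Dual and operator norms\<close>

lemma bdd_above_dual_norm:
  fixes N :: "real^'n \<Rightarrow> real"
  assumes "is_norm N"
  shows "bdd_above {h \<bullet> x | x. N x = 1}"
proof -
  obtain c where c: "c > 0" "\<And>x. c * norm x \<le> N x" using is_norm_ge_norm[OF assms] by blast
  have "h \<bullet> x \<le> norm h * (1 / c)" if "N x = 1" for x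
  proof -
    have "norm x \<le> 1 / c" using c(2)[of x] that c(1) by (simp add: field_simps)
    then show ?thesis
      using norm_cauchy_schwarz[of h x] by (meson mult_left_mono norm_ge_zero order_trans)
  qed
  then show ?thesis by (auto simp: bdd_above_def)
qed

lemma inner_le_dual_norm:
  fixes N :: "real^'n \<Rightarrow> real"
  assumes "is_norm N"
  shows "h \<bullet> z \<le> dual_norm N h * N z"
proof (cases "z = 0")
  case False
  then have "h \<bullet> ((1 / N z) *\<^sub>R z) \<le> dual_norm N h"
    unfolding dual_norm_def using is_norm_normalize[OF assms]
    by (intro cSup_upper bdd_above_dual_norm[OF assms]) blast
  then show ?thesis using is_norm_pos[OF assms False] by (simp add: field_simps)
qed (simp add: is_norm_zero[OF assms])

lemma dual_norm_le:
  fixes N :: "real^'n \<Rightarrow> real"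
  assumes "is_norm N" "\<And>x. N x = 1 \<Longrightarrow> h \<bullet> x \<le> B"
  shows "dual_norm N h \<le> B"
  unfolding dual_norm_def using is_norm_unit_exists[OF assms(1)] assms(2)
  by (intro cSup_least) auto

lemma dual_norm_nonneg:
  fixes N :: "real^'n \<Rightarrow> real"
  assumes "is_norm N"
  shows "0 \<le> dual_norm N h"
proof -
  obtain u where u: "N u = 1" using is_norm_unit_exists[OF assms] .
  moreover have "N (- u) = 1" using u is_norm_scaleR[OF assms, of "-1" u] by simp
  ultimately show ?thesis
    using inner_le_dual_norm[OF assms, of h u] inner_le_dual_norm[OF assms, of h "- u"] by simp
qed

lemma op_norm_mult_le:
  fixes Nn :: "real^'n \<Rightarrow> real" and Nm :: "real^'m \<Rightarrow> real"
  assumes "is_norm Nn" "is_norm Nm"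
  shows "Nm (A *v x) \<le> op_norm Nn Nm A * Nn x"
proof (cases "x = 0")
  case False
  obtain c where c: "c > 0" "\<And>x. c * norm x \<le> Nn x" using is_norm_ge_norm[OF assms(1)] by blast
  obtain C where C: "C > 0" "\<And>x. Nm x \<le> C * norm x" using is_norm_le_norm[OF assms(2)] by blast
  obtain K where K: "K > 0" "\<And>x. norm (A *v x) \<le> norm x * K"
    using bounded_linear.pos_bounded[OF matrix_vector_mul_bounded_linear[of A]] by blast
  have "Nm (A *v x') \<le> C * (K / c)" if "Nn x' = 1" for x'
  proof -
    have "norm x' \<le> 1 / c" using c(2)[of x'] that c(1) by (simp add: field_simps)
    then have "norm x' * K \<le> 1 / c * K" using K(1) by (intro mult_right_mono) auto
    then have "norm (A *v x') \<le> K / c" using K(2)[of x'] by simp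
    then show ?thesis using C(1) C(2)[of "A *v x'"] by (meson mult_left_mono less_imp_le order_trans)
  qed
  then have "bdd_above {Nm (A *v x') | x'. Nn x' = 1}" by (auto simp: bdd_above_def)
  then have "Nm (A *v ((1 / Nn x) *\<^sub>R x)) \<le> op_norm Nn Nm A"
    unfolding op_norm_def using is_norm_normalize[OF assms(1) False] by (intro cSup_upper) blast
  then have "Nm (A *v x) / Nn x \<le> op_norm Nn Nm A"
    using is_norm_nonneg[OF assms(1), of x]
    by (simp add: matrix_vector_mult_scaleR is_norm_scaleR[OF assms(2)])
  then show ?thesis using pos_divide_le_eq[OF is_norm_pos[OF assms(1) False]] by blast
qed (simp add: is_norm_zero[OF assms(1)] is_norm_zero[OF assms(2)])

lemma op_norm_nonneg:
  fixes Nn :: "real^'n \<Rightarrow> real" and Nm :: "real^'m \<Rightarrow> real"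
  assumes "is_norm Nn" "is_norm Nm"
  shows "0 \<le> op_norm Nn Nm A"
proof -
  obtain u where "Nn u = 1" using is_norm_unit_exists[OF assms(1)] .
  then show ?thesis
    using op_norm_mult_le[OF assms, of A u] is_norm_nonneg[OF assms(2), of "A *v u"] by simp
qed

lemma dual_lower_bound_imp_ball_subset_image:
  fixes Nn :: "real^'n \<Rightarrow> real" and Nm :: "real^'m \<Rightarrow> real" and A :: "real^'n^'m"
  assumes "is_norm Nn" "is_norm Nm"
    and dual: "\<And>h. \<mu> * dual_norm Nm h \<le> dual_norm Nn (transpose A *v h)"
  shows "{z. Nm z \<le> \<mu>} \<subseteq> (\<lambda>x. A *v x) ` {x. Nn x \<le> 1}"
proof
  define K where "K = (\<lambda>x. A *v x) ` {x. Nn x \<le> 1}"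
  have "convex K" unfolding K_def
    by (intro convex_linear_image convex_is_norm_ball[OF assms(1)] matrix_vector_mul_linear)
  have "closed K" unfolding K_def
    by (rule compact_imp_closed compact_continuous_image compact_is_norm_ball[OF assms(1)]
        linear_continuous_on[OF matrix_vector_mul_bounded_linear])+
  fix z assume "z \<in> {z. Nm z \<le> \<mu>}"
  then have z: "Nm z \<le> \<mu>" by simp
  show "z \<in> K"
  proof (rule ccontr)
    assume "z \<notin> K"
    with \<open>convex K\<close> \<open>closed K\<close> obtain a b where ab: "a \<bullet> z < b" "\<And>x. x \<in> K \<Longrightarrow> b < a \<bullet> x"
      by (metis separating_hyperplane_closed_point)
    have "dual_norm Nn (transpose A *v (- a)) \<le> - b"
    proof (rule dual_norm_le[OF assms(1)])
      fix x assume "Nn x = 1"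
      then have "b < a \<bullet> (A *v x)" using ab(2) unfolding K_def by simp
      then show "(transpose A *v (- a)) \<bullet> x \<le> - b" by (simp add: dot_lmul_matrix)
    qed
    moreover have "- a \<bullet> z \<le> dual_norm Nm (- a) * \<mu>"
      using inner_le_dual_norm[OF assms(2), of "- a" z] z dual_norm_nonneg[OF assms(2), of "- a"]
      by (smt (verit) mult_left_mono)
    ultimately show False using dual[of "- a"] ab(1) by (simp add: mult.commute)
  qed
qed

lemma dual_lower_bound_imp_right_inverse:
  fixes Nn :: "real^'n \<Rightarrow> real" and Nm :: "real^'m \<Rightarrow> real" and A :: "real^'n^'m"
  assumes "is_norm Nn" "is_norm Nm" "\<mu> > 0"
    and "\<And>h. \<mu> * dual_norm Nm h \<le> dual_norm Nn (transpose A *v h)"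
  obtains d where "A *v d = e" "Nn d \<le> Nm e / \<mu>"
proof (cases "e = 0")
  case True
  then show thesis using that[of 0] by (simp add: is_norm_zero assms)
next
  case False
  then have pos: "Nm e > 0" using is_norm_pos[OF assms(2)] by blast
  have "Nm ((\<mu> / Nm e) *\<^sub>R e) = \<mu>" using pos assms(3) by (simp add: is_norm_scaleR[OF assms(2)])
  then have "(\<mu> / Nm e) *\<^sub>R e \<in> (\<lambda>x. A *v x) ` {x. Nn x \<le> 1}"
    using subsetD[OF dual_lower_bound_imp_ball_subset_image[OF assms(1,2,4)]] by simp
  then obtain x where x: "Nn x \<le> 1" "A *v x = (\<mu> / Nm e) *\<^sub>R e" by auto
  show thesis
  proof (rule that[of "(Nm e / \<mu>) *\<^sub>R x"])
    show "A *v ((Nm e / \<mu>) *\<^sub>R x) = e" using x(2) pos assms(3) by (simp add: matrix_vector_mult_scaleR)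
    show "Nn ((Nm e / \<mu>) *\<^sub>R x) \<le> Nm e / \<mu>"
      using x(1) pos assms(3) by (simp add: is_norm_scaleR[OF assms(1)] mult_left_le divide_right_mono)
  qed
qed

section \<open>Descent of the merit function\<close>

lemma has_derivative_remainder_eventually_le:
  fixes f :: "'a::real_normed_vector \<Rightarrow> 'b::euclidean_space"
  assumes "is_norm N" "(f has_derivative f') (at x)" "\<eta> > 0"
  shows "\<forall>\<^sub>F t in at_right 0. N (f (x + t *\<^sub>R d) - f x - f' (t *\<^sub>R d)) \<le> \<eta> * t"
proof -
  obtain C where C: "C > 0" "\<And>z. N z \<le> C * norm z" using is_norm_le_norm[OF assms(1)] by blast
  define \<eta>' where "\<eta>' = \<eta> / (C * (norm d + 1))"
  have "\<eta>' > 0" unfolding \<eta>'_def using C(1) assms(3) by (simp add: add_nonneg_pos)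
  then obtain \<delta> where "\<delta> > 0"
    and \<delta>: "\<And>z. norm (z - x) < \<delta> \<Longrightarrow> norm (f z - f x - f' (z - x)) \<le> \<eta>' * norm (z - x)"
    using assms(2) unfolding has_derivative_at_alt by blast
  have "\<forall>\<^sub>F t in at_right 0. t \<in> {0<..<\<delta> / (norm d + 1)}"
    using \<open>\<delta> > 0\<close> by (intro eventually_at_right_real) (simp add: add_nonneg_pos)
  then show ?thesis
  proof (rule eventually_mono, clarsimp)
    fix t :: real assume t: "0 < t" "t < \<delta> / (norm d + 1)"
    have "t * norm d < \<delta>"
      using t by (smt (verit) mult_left_mono norm_ge_zero pos_less_divide_eq)
    then have "N (f (x + t *\<^sub>R d) - f x - f' (t *\<^sub>R d)) \<le> C * (\<eta>' * (t * norm d))"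
      using \<delta>[of "x + t *\<^sub>R d"] C t(1)
      by (smt (verit) add_diff_cancel_left' mult_left_mono norm_scaleR)
    also have "\<dots> = \<eta> * t * (norm d / (norm d + 1))"
      unfolding \<eta>'_def using C(1) norm_ge_zero[of d] by (simp add: add_pos_nonneg)
    also have "\<dots> \<le> \<eta> * t"
      using t(1) assms(3) by (intro mult_left_le) (auto simp: divide_le_eq_1 add_nonneg_pos)
    finally show "N (f (x + t *\<^sub>R d) - f x - f' (t *\<^sub>R d)) \<le> \<eta> * t" .
  qed
qed

lemma merit_step_le:
  fixes Nn :: "real^'n \<Rightarrow> real" and Nm :: "real^'m \<Rightarrow> real" and g :: "real^'n \<Rightarrow> real^'m"
  assumes "is_norm Nn" "is_norm Nm" "\<mu> > 0"
    and d: "A *v d = y - g x" "Nn d \<le> Nm (y - g x) / \<mu>"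
    and t: "0 \<le> t" "t \<le> 1"
  shows "2 / \<mu> * Nm (g (x + t *\<^sub>R d) - y) + Nn (x + t *\<^sub>R d)
    \<le> 2 / \<mu> * Nm (g x - y) + Nn x - t * (Nm (g x - y) / \<mu>) * (1 - 2 * op_norm Nn Nm (B - A) / \<mu>)
      + 2 / \<mu> * Nm (g (x + t *\<^sub>R d) - g x - B *v (t *\<^sub>R d))"
proof -
  define \<epsilon> where "\<epsilon> = Nm (g x - y)"
  define q where "q = op_norm Nn Nm (B - A)"
  define z where "z = x + t *\<^sub>R d"
  define r where "r = g z - g x - B *v (t *\<^sub>R d)"
  have d_le: "Nn d \<le> \<epsilon> / \<mu>" using d(2) is_norm_minus_commute[OF assms(2)] unfolding \<epsilon>_def by metis
  have "(B - A) *v d = B *v d - (y - g x)" using d(1) by (simp add: matrix_vector_mult_diff_rdistrib)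
  then have "g z - y = (1 - t) *\<^sub>R (g x - y) + t *\<^sub>R ((B - A) *v d) + r"
    unfolding z_def r_def by (simp add: algebra_simps)
  then have "Nm (g z - y) \<le> (1 - t) * \<epsilon> + t * Nm ((B - A) *v d) + Nm r"
    unfolding \<epsilon>_def using t is_norm_triangle[OF assms(2)] by (smt (verit) is_norm_scaleR[OF assms(2)])
  moreover have "Nm ((B - A) *v d) \<le> q * (\<epsilon> / \<mu>)"
    using op_norm_mult_le[OF assms(1,2), of "B - A" d] op_norm_nonneg[OF assms(1,2), of "B - A"] d_le
    unfolding q_def by (smt (verit) mult_left_mono)
  ultimately have "Nm (g z - y) \<le> (1 - t) * \<epsilon> + t * (q * (\<epsilon> / \<mu>)) + Nm r"
    using mult_left_mono[OF _ t(1)] by fastforce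
  then have "2 / \<mu> * Nm (g z - y) \<le> 2 / \<mu> * ((1 - t) * \<epsilon> + t * (q * (\<epsilon> / \<mu>)) + Nm r)"
    using \<open>\<mu> > 0\<close> by (intro mult_left_mono) auto
  moreover have "Nn z \<le> Nn x + t * (\<epsilon> / \<mu>)"
    unfolding z_def using is_norm_triangle[OF assms(1), of x "t *\<^sub>R d"] d_le t(1)
    by (smt (verit) is_norm_scaleR[OF assms(1)] mult_left_mono)
  ultimately have "2 / \<mu> * Nm (g z - y) + Nn z
      \<le> 2 / \<mu> * ((1 - t) * \<epsilon> + t * (q * (\<epsilon> / \<mu>)) + Nm r) + Nn x + t * (\<epsilon> / \<mu>)"
    by linarith
  also have "\<dots> = 2 / \<mu> * \<epsilon> + Nn x - t * (\<epsilon> / \<mu>) * (1 - 2 * q / \<mu>) + 2 / \<mu> * Nm r"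
    using \<open>\<mu> > 0\<close> by (simp add: field_simps)
  finally show ?thesis unfolding \<epsilon>_def q_def z_def r_def .
qed

lemma merit_descent:
  fixes Nn :: "real^'n \<Rightarrow> real" and Nm :: "real^'m \<Rightarrow> real" and g :: "real^'n \<Rightarrow> real^'m"
  assumes "is_norm Nn" "is_norm Nm" "\<mu> > 0"
    and deriv: "(g has_derivative (\<lambda>h. B *v h)) (at x)"
    and close: "op_norm Nn Nm (B - A) < \<mu> / 2"
    and d: "A *v d = y - g x" "Nn d \<le> Nm (y - g x) / \<mu>"
    and "Nn x < \<rho>" "g x \<noteq> y"
  obtains z where "Nn z < \<rho>" "2 / \<mu> * Nm (g z - y) + Nn z < 2 / \<mu> * Nm (g x - y) + Nn x"
proof -
  define \<kappa> where "\<kappa> = Nm (g x - y) / \<mu> * (1 - 2 * op_norm Nn Nm (B - A) / \<mu>)"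
  have "Nm (g x - y) > 0" using is_norm_pos[OF assms(2)] \<open>g x \<noteq> y\<close> by simp
  then have "\<kappa> > 0" unfolding \<kappa>_def using close \<open>\<mu> > 0\<close> by (simp add: field_simps)
  have "isCont Nn x'" for x'
    using is_norm_continuous_on[OF assms(1), of UNIV] by (simp add: continuous_on_eq_continuous_at)
  then have "((\<lambda>t. Nn (x + t *\<^sub>R d)) \<longlongrightarrow> Nn (x + 0 *\<^sub>R d)) (at_right 0)"
    by (intro isCont_tendsto_compose[where g = Nn] tendsto_intros)
  then have "\<forall>\<^sub>F t in at_right 0. Nn (x + t *\<^sub>R d) < \<rho>"
    using \<open>Nn x < \<rho>\<close> by (simp add: order_tendstoD(2))
  moreover have "\<forall>\<^sub>F t in at_right 0. Nm (g (x + t *\<^sub>R d) - g x - B *v (t *\<^sub>R d)) \<le> \<kappa> * \<mu> / 4 * t"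
    using \<open>\<kappa> > 0\<close> \<open>\<mu> > 0\<close>
    by (intro has_derivative_remainder_eventually_le[OF assms(2) deriv]) simp
  moreover have "\<forall>\<^sub>F t in at_right 0. t \<in> {0<..<1::real}"
    by (intro eventually_at_right_real) simp
  ultimately have "\<forall>\<^sub>F t in at_right 0. Nn (x + t *\<^sub>R d) < \<rho>
      \<and> Nm (g (x + t *\<^sub>R d) - g x - B *v (t *\<^sub>R d)) \<le> \<kappa> * \<mu> / 4 * t \<and> t \<in> {0<..<1}"
    by (intro eventually_conj)
  then have "\<exists>t. Nn (x + t *\<^sub>R d) < \<rho>
      \<and> Nm (g (x + t *\<^sub>R d) - g x - B *v (t *\<^sub>R d)) \<le> \<kappa> * \<mu> / 4 * t \<and> t \<in> {0<..<1}"
    by (rule eventually_happens'[OF trivial_limit_at_right_real])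
  then obtain t where "Nn (x + t *\<^sub>R d) < \<rho>"
    and rem: "Nm (g (x + t *\<^sub>R d) - g x - B *v (t *\<^sub>R d)) \<le> \<kappa> * \<mu> / 4 * t"
    and "t \<in> {0<..<1}"
    by (elim exE conjE)
  then have "0 < t" "0 \<le> t" "t \<le> 1" by simp_all
  have "2 / \<mu> * Nm (g (x + t *\<^sub>R d) - g x - B *v (t *\<^sub>R d)) \<le> 2 / \<mu> * (\<kappa> * \<mu> / 4 * t)"
    using rem \<open>\<mu> > 0\<close> by (intro mult_left_mono) simp_all
  moreover have "t * \<kappa> = t * (Nm (g x - y) / \<mu>) * (1 - 2 * op_norm Nn Nm (B - A) / \<mu>)"
    unfolding \<kappa>_def by simp
  ultimately have "2 / \<mu> * Nm (g (x + t *\<^sub>R d) - y) + Nn (x + t *\<^sub>R d)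
      \<le> 2 / \<mu> * Nm (g x - y) + Nn x - t * \<kappa> + 2 / \<mu> * (\<kappa> * \<mu> / 4 * t)"
    using merit_step_le[where g = g and x = x and t = t and B = B, OF assms(1-3) d \<open>0 \<le> t\<close> \<open>t \<le> 1\<close>]
    by linarith
  also have "\<dots> < 2 / \<mu> * Nm (g x - y) + Nn x" using \<open>t > 0\<close> \<open>\<kappa> > 0\<close> \<open>\<mu> > 0\<close> by simp
  finally show thesis using that \<open>Nn (x + t *\<^sub>R d) < \<rho>\<close> by blast
qed

lemma exists_merit_minimizer:
  fixes Nn :: "'a::euclidean_space \<Rightarrow> real" and Nm :: "'b::euclidean_space \<Rightarrow> real"
  assumes "is_norm Nn" "is_norm Nm" "0 \<le> \<rho>" "continuous_on {x. Nn x \<le> \<rho>} g"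
  obtains x where "Nn x \<le> \<rho>"
    "\<And>z. Nn z \<le> \<rho> \<Longrightarrow> c * Nm (g x - y) + Nn x \<le> c * Nm (g z - y) + Nn z"
proof -
  have "0 \<in> {x. Nn x \<le> \<rho>}" using assms(3) is_norm_zero[OF assms(1)] by simp
  then have "{x. Nn x \<le> \<rho>} \<noteq> {}" by blast
  have "continuous_on {x. Nn x \<le> \<rho>} (\<lambda>x. Nm (g x - y))"
    by (intro continuous_on_compose2[OF is_norm_continuous_on[OF assms(2)]] continuous_intros assms(4))
      auto
  then have "continuous_on {x. Nn x \<le> \<rho>} (\<lambda>x. c * Nm (g x - y) + Nn x)"
    by (intro continuous_intros is_norm_continuous_on[OF assms(1)])
  with \<open>{x. Nn x \<le> \<rho>} \<noteq> {}\<close> obtain x where "x \<in> {x. Nn x \<le> \<rho>}"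
    "\<forall>z \<in> {x. Nn x \<le> \<rho>}. c * Nm (g x - y) + Nn x \<le> c * Nm (g z - y) + Nn z"
    using continuous_attains_inf[OF compact_is_norm_ball[OF assms(1)]] by blast
  then show thesis using that by simp
qed

lemma merit_minimizer_solves:
  fixes Nn :: "real^'n \<Rightarrow> real" and Nm :: "real^'m \<Rightarrow> real" and g :: "real^'n \<Rightarrow> real^'m"
  assumes "is_norm Nn" "is_norm Nm" "\<mu> > 0"
    and "(g has_derivative (\<lambda>h. B *v h)) (at x)"
    and "op_norm Nn Nm (B - A) < \<mu> / 2"
    and "\<And>h. \<mu> * dual_norm Nm h \<le> dual_norm Nn (transpose A *v h)"
    and "Nn x < \<rho>"
    and min: "\<And>z. Nn z \<le> \<rho> \<Longrightarrow> 2 / \<mu> * Nm (g x - y) + Nn x \<le> 2 / \<mu> * Nm (g z - y) + Nn z"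
  shows "g x = y"
proof (rule ccontr)
  assume "g x \<noteq> y"
  obtain d where "A *v d = y - g x" "Nn d \<le> Nm (y - g x) / \<mu>"
    using dual_lower_bound_imp_right_inverse[OF assms(1-3,6)] .
  with merit_descent[OF assms(1-5)] obtain z where "Nn z < \<rho>"
    "2 / \<mu> * Nm (g z - y) + Nn z < 2 / \<mu> * Nm (g x - y) + Nn x"
    using \<open>Nn x < \<rho>\<close> \<open>g x \<noteq> y\<close> by blast
  then show False using min[of z] by simp
qed

theorem theorem2:
  fixes Nn :: "real^'n \<Rightarrow> real" and Nm :: "real^'m \<Rightarrow> real"
    and g :: "real^'n \<Rightarrow> real^'m" and g' :: "real^'n \<Rightarrow> real^'n^'m"
    and y :: "real^'m" and \<rho> L \<mu>0 :: real
  assumes "is_norm Nn" and "is_norm Nm"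
    and "\<rho> > 0" and "L > 0" and "\<mu>0 > 0"
    and "g 0 = 0"
    and "\<forall>x. Nn x \<le> \<rho> \<longrightarrow> (g has_derivative (\<lambda>h. g' x *v h)) (at x)"
    and "\<forall>xa xb. Nn xa \<le> \<rho> \<longrightarrow> Nn xb \<le> \<rho> \<longrightarrow>
           op_norm Nn Nm (g' xa - g' xb) \<le> L * Nn (xa - xb)"
    and "\<forall>h. dual_norm Nn (transpose (g' 0) *v h) \<ge> \<mu>0 * dual_norm Nm h"
    and "Nm y < \<mu>0^2 / (4 * L)" and "\<mu>0 / (2 * L) \<le> \<rho>"
  shows "\<exists>x. g x = y \<and> Nn x \<le> 2 * Nm y / \<mu>0"
proof -
  define \<Psi> where "\<Psi> x = 2 / \<mu>0 * Nm (g x - y) + Nn x" for x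
  have "continuous_on {x. Nn x \<le> \<rho>} g"
    using assms(7) has_derivative_continuous by (blast intro: continuous_at_imp_continuous_on)
  then obtain x where x: "Nn x \<le> \<rho>" and min: "\<And>z. Nn z \<le> \<rho> \<Longrightarrow> \<Psi> x \<le> \<Psi> z"
    using exists_merit_minimizer[OF assms(1,2)] assms(3) unfolding \<Psi>_def by (metis less_imp_le)
  have "0 \<le> \<rho>" "Nn 0 = 0" using assms(3) is_norm_zero[OF assms(1)] by simp_all
  have "Nn x \<le> \<Psi> x" unfolding \<Psi>_def using assms(5) is_norm_nonneg[OF assms(2)] by simp
  also have "\<dots> \<le> \<Psi> 0" using min \<open>Nn 0 = 0\<close> \<open>0 \<le> \<rho>\<close> by simp
  also have "\<dots> = 2 * Nm y / \<mu>0"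
    unfolding \<Psi>_def using assms(6) \<open>Nn 0 = 0\<close> is_norm_scaleR[OF assms(2), of "-1" y] by simp
  finally have bound: "Nn x \<le> 2 * Nm y / \<mu>0" .
  also have "\<dots> < \<mu>0 / (2 * L)" using assms(4,5,10) by (simp add: field_simps power2_eq_square)
  finally have "Nn x < \<mu>0 / (2 * L)" .
  then have "Nn x < \<rho>" "L * Nn x < \<mu>0 / 2"
    using assms(4,11) by (linarith, simp add: pos_less_divide_eq algebra_simps)
  moreover have "op_norm Nn Nm (g' x - g' 0) \<le> L * Nn x"
    using assms(8)[rule_format, of x 0] x \<open>Nn 0 = 0\<close> \<open>0 \<le> \<rho>\<close> by simp
  ultimately have close: "op_norm Nn Nm (g' x - g' 0) < \<mu>0 / 2" by linarith
  have "g x = y"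
    using merit_minimizer_solves[OF assms(1,2,5) _ close] assms(7,9) x \<open>Nn x < \<rho>\<close> min
    unfolding \<Psi>_def by (simp add: mult.commute)
  with bound show ?thesis by blast
qed

end
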